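(* Let $S\subset\mathbb{R}^q$ be compact and $\ell:\mathbb{R}^q\times\mathbb{R}^q\to(0,1)$ continuous. Let $s\in S$ and let $(\xi_k)_{k\in\mathbb{N}}\subset\mathbb{R}^q$ be $n$-periodic (i.e. $\xi_{k+n}=\xi_k$ for all $k$). Let $d_1,d_2,\dots\in\{0,1\}$ be independent random variables with $\Pr(d_k=1)=\ell(s,\xi_k)$. Let $c_1,\dots,c_M\in S$ be distinct, let $\hat p_0:\{1,\dots,M\}\to(0,1)$ with $\sum_i\hat p_0(i)=1$, and define $\hat p_k$ by $$\hat p_k(i\mid d_{1:k};\xi_{1:k})=\frac{g(d_k\mid c_i;\xi_k)\,\hat p_{k-1}(i\mid d_{1:k-1};\xi_{1:k-1})}{\sum_{j=1}^M g(d_k\mid c_j;\xi_k)\,\hat p_{k-1}(j\mid d_{1:k-1};\xi_{1:k-1})},$$ where $g(d\mid x;\xi)=\ell(x,\xi)^d(1-\ell(x,\xi))^{1-d}$. Suppose $c_j=s$ for some $j$, and suppose $$\bigcap_{k=1}^n\{x\in S:\ell(x,\xi_k)=\ell(s,\xi_k)\}=\{s\}.$$ Then $\hat p_k(j\mid d_{1:k};\xi_{1:k})\to 1$ almost surely. *)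

theory Defs
  imports "HOL-Analysis.Analysis" "HOL-Probability.Probability"
begin

definition lik :: "('a \<Rightarrow> 'b \<Rightarrow> real) \<Rightarrow> nat \<Rightarrow> 'a \<Rightarrow> 'b \<Rightarrow> real" where
  "lik l d x xi = l x xi ^ d * (1 - l x xi) ^ (1 - d)"

primrec phat :: "('a \<Rightarrow> 'b \<Rightarrow> real) \<Rightarrow> (nat \<Rightarrow> 'a) \<Rightarrow> nat \<Rightarrow> (nat \<Rightarrow> real)
    \<Rightarrow> (nat \<Rightarrow> 'b) \<Rightarrow> (nat \<Rightarrow> nat) \<Rightarrow> nat \<Rightarrow> nat \<Rightarrow> real" where
  "phat l c M p0 xi d 0 i = p0 i"
| "phat l c M p0 xi d (Suc k) i =
     lik l (d (Suc k)) (c i) (xi (Suc k)) * phat l c M p0 xi d k i /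
     (\<Sum>j=1..M. lik l (d (Suc k)) (c j) (xi (Suc k)) * phat l c M p0 xi d k j)"

end

theory Submission
  imports Defs "HOL-Real_Asymp.Real_Asymp"
begin

text \<open>
  Bayes' rule puts the posterior in odds form: the posterior of the true candidate \<open>c j = s\<close> is
  \<open>p0 j / (p0 j + \<Sum>i\<noteq>j. p0 i * exp (\<Lambda>\<^sub>k i))\<close>, where \<open>\<Lambda>\<^sub>k i\<close> is the log-likelihood ratio
  of \<open>c i\<close> against \<open>s\<close> after \<open>k\<close> observations. Its increments are independent and bounded, and
  their means are minus Kullback-Leibler divergences of Bernoulli laws: never positive, and by
  identifiability strictly negative at some phase of the period, so the mean of \<open>\<Lambda>\<^sub>k i\<close>
  decreases linearly. Hoeffding's inequality and Borel-Cantelli keep \<open>\<Lambda>\<^sub>k i\<close> below its mean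
  plus \<open>\<epsilon> k\<close> eventually, almost surely, hence \<open>\<Lambda>\<^sub>k i \<rightarrow> -\<infinity>\<close> and the posterior tends to 1.
\<close>

lemma gibbs_bernoulli:
  fixes p q :: real
  assumes "0 < p" "p < 1" "0 < q" "q < 1"
  shows "p * (ln q - ln p) + (1 - p) * (ln (1 - q) - ln (1 - p)) \<le> 0"
    and "q \<noteq> p \<Longrightarrow> p * (ln q - ln p) + (1 - p) * (ln (1 - q) - ln (1 - p)) < 0"
proof -
  have eq: "p * (ln q - ln p) + (1 - p) * (ln (1 - q) - ln (1 - p)) =
      p * ln (q / p) + (1 - p) * ln ((1 - q) / (1 - p))"
    using assms by (simp add: ln_div)
  have zero: "p * (q / p - 1) + (1 - p) * ((1 - q) / (1 - p) - 1) = 0"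
    using assms by (simp add: field_simps)
  have le1: "p * ln (q / p) \<le> p * (q / p - 1)"
    using assms by (intro mult_left_mono ln_le_minus_one) auto
  have le2: "(1 - p) * ln ((1 - q) / (1 - p)) \<le> (1 - p) * ((1 - q) / (1 - p) - 1)"
    using assms by (intro mult_left_mono ln_le_minus_one) auto
  show "p * (ln q - ln p) + (1 - p) * (ln (1 - q) - ln (1 - p)) \<le> 0"
    using le1 le2 zero unfolding eq by linarith
  assume "q \<noteq> p"
  then have "ln (q / p) \<noteq> q / p - 1"
    using assms ln_eq_minus_one[of "q / p"] by auto
  then have "p * ln (q / p) < p * (q / p - 1)"
    using assms ln_le_minus_one[of "q / p"] by (intro mult_strict_left_mono) auto
  then show "p * (ln q - ln p) + (1 - p) * (ln (1 - q) - ln (1 - p)) < 0"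
    using le2 zero unfolding eq by linarith
qed

lemma periodic_add_mult:
  fixes f :: "nat \<Rightarrow> 'a"
  assumes "\<And>k. f (k + n) = f k"
  shows "f (m + t * n) = f m"
proof (induction t)
  case (Suc t)
  have "m + Suc t * n = (m + t * n) + n" by simp
  then show ?case using assms Suc.IH by metis
qed simp

lemma periodic_mod:
  fixes f :: "nat \<Rightarrow> 'a"
  assumes "\<And>k. f (k + n) = f k"
  shows "f m = f (m mod n)"
  using periodic_add_mult[of f n "m mod n" "m div n", OF assms] by simp

lemma sum_periodic_nonpos_le:
  fixes g :: "nat \<Rightarrow> real"
  assumes per: "\<And>m. g (m + n) = g m" and nonpos: "\<And>m. g m \<le> 0" and k0: "k0 \<in> {1..n}"
  shows "(\<Sum>m=1..k. g m) \<le> real (k div n) * g k0"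
proof -
  define h where "h t = k0 + t * n" for t
  have inj: "inj_on h {..<k div n}"
    using k0 by (auto simp: h_def inj_on_def)
  have sub: "h ` {..<k div n} \<subseteq> {1..k}"
  proof
    fix m assume "m \<in> h ` {..<k div n}"
    then obtain t where t: "t < k div n" "m = k0 + t * n" unfolding h_def by auto
    have "k0 + t * n \<le> Suc t * n" using k0 by auto
    also have "\<dots> \<le> k div n * n" using t by (intro mult_right_mono) auto
    also have "\<dots> \<le> k" by (metis div_mult_mod_eq le_add1)
    finally show "m \<in> {1..k}" using t k0 by auto
  qed
  have "(\<Sum>t<k div n. - g (h t)) = (\<Sum>m\<in>h ` {..<k div n}. - g m)"
    by (rule sum.reindex[OF inj, unfolded comp_def, symmetric])
  also have "\<dots> \<le> (\<Sum>m=1..k. - g m)"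
    using sub nonpos by (intro sum_mono2) auto
  finally show ?thesis
    using periodic_add_mult[of g n, OF per] by (simp add: h_def sum_negf)
qed

lemma filterlim_at_bot_below_linear_drift:
  fixes a :: "nat \<Rightarrow> real" and \<kappa> \<delta> :: real
  assumes "0 < n" "0 \<le> \<kappa>" "\<delta> < \<kappa> / n"
    and bound: "\<forall>\<^sub>F k in sequentially. a k \<le> \<delta> * k - \<kappa> * real (k div n)"
  shows "filterlim a at_bot sequentially"
proof -
  define \<epsilon> where "\<epsilon> = \<kappa> / n - \<delta>"
  have "0 < \<epsilon>"
    using assms by (simp add: \<epsilon>_def)
  then have lim: "filterlim (\<lambda>k::nat. \<kappa> - \<epsilon> * k) at_bot sequentially"
    by real_asymp
  show ?thesis
  proof (rule filterlim_at_bot_mono[OF lim], use bound in eventually_elim)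
    case (elim k)
    have "k < (k div n + 1) * n"
      using \<open>0 < n\<close> by (metis div_mult_mod_eq mod_less_divisor add_mult_distrib mult_1
          nat_add_left_cancel_less)
    then have "real k < (real (k div n) + 1) * n"
      by (metis of_nat_1 of_nat_add of_nat_less_iff of_nat_mult)
    then have "real k / n - 1 \<le> real (k div n)"
      using \<open>0 < n\<close> by (simp add: field_simps)
    then have "\<delta> * k - \<kappa> * real (k div n) \<le> \<delta> * k - \<kappa> * (real k / n - 1)"
      using \<open>0 \<le> \<kappa>\<close> by (simp add: mult_left_mono)
    also have "\<dots> = \<kappa> - \<epsilon> * k"
      by (simp add: \<epsilon>_def algebra_simps)
    finally show ?case
      using elim by simp
  qed
qed

lemma (in prob_space) expectation_fun_of_bernoulli:
  fixes X :: "'a \<Rightarrow> nat" and f :: "nat \<Rightarrow> real"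
  assumes "random_variable (count_space UNIV) X"
    and "\<And>\<omega>. \<omega> \<in> space M \<Longrightarrow> X \<omega> \<in> {0, 1}"
  shows "expectation (\<lambda>\<omega>. f (X \<omega>)) =
    prob {\<omega>\<in>space M. X \<omega> = 1} * f 1 + (1 - prob {\<omega>\<in>space M. X \<omega> = 1}) * f 0"
proof -
  define E where "E = {\<omega>\<in>space M. X \<omega> = 1}"
  have E: "E \<in> events"
    unfolding E_def using assms(1) by measurable
  have "expectation (\<lambda>\<omega>. f (X \<omega>)) = expectation (\<lambda>\<omega>. f 0 + (f 1 - f 0) * indicator E \<omega>)"
    by (intro Bochner_Integration.integral_cong) (auto simp: E_def indicator_def dest: assms(2))
  also have "\<dots> = f 0 + (f 1 - f 0) * prob E"
    using E by (simp add: emeasure_finite less_top[symmetric] prob_space)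
  finally show ?thesis
    unfolding E_def by (simp add: algebra_simps)
qed

lemma (in prob_space) AE_eventually_sum_lt_expectation:
  fixes Y :: "nat \<Rightarrow> 'a \<Rightarrow> real" and B \<delta> :: real
  assumes indep: "indep_vars (\<lambda>_. borel) Y {1..}"
    and bounded: "\<And>m \<omega>. 1 \<le> m \<Longrightarrow> \<omega> \<in> space M \<Longrightarrow> \<bar>Y m \<omega>\<bar> \<le> B"
    and "0 < \<delta>"
  shows "AE \<omega> in M. \<forall>\<^sub>F k in sequentially.
           (\<Sum>m=1..k. Y m \<omega>) < (\<Sum>m=1..k. expectation (Y m)) + \<delta> * k"
proof -
  define C where "C = max B 1"
  define A where "A k = {\<omega>\<in>space M. (\<Sum>m=1..k. expectation (Y m)) + \<delta> * k \<le> (\<Sum>m=1..k. Y m \<omega>)}"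
    for k
  define r where "r = exp (- \<delta>\<^sup>2 / (2 * C\<^sup>2))"
  have C: "1 \<le> C" "\<And>m \<omega>. 1 \<le> m \<Longrightarrow> \<omega> \<in> space M \<Longrightarrow> Y m \<omega> \<in> {-C..C}"
    using bounded by (fastforce simp: C_def abs_le_iff)+
  have Y_measurable: "Y m \<in> borel_measurable M" if "1 \<le> m" for m
    using indep that unfolding indep_vars_def by auto
  have A_events: "A k \<in> events" for k
    unfolding A_def using Y_measurable by measurable
  have A_le: "prob (A k) \<le> r ^ k" if "1 \<le> k" for k
  proof -
    interpret Hoeffding_ineq M "{1..k}" Y "\<lambda>_. - C" "\<lambda>_. C" "\<Sum>m\<in>{1..k}. expectation (Y m)"
    proof unfold_locales
      show "indep_vars (\<lambda>_. borel) Y {1..k}"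
        by (rule indep_vars_subset[OF indep]) auto
    qed (use C(2) in auto)
    have "prob (A k) \<le> exp (-2 * (\<delta> * k)\<^sup>2 / (\<Sum>m\<in>{1..k}. (C - - C)\<^sup>2))"
      unfolding A_def using Hoeffding_ineq_ge[of "\<delta> * k"] \<open>0 < \<delta>\<close> that C(1) by simp
    also have "\<dots> = r ^ k"
      using that C(1) by (simp add: r_def exp_of_nat_mult[symmetric] field_simps power2_eq_square)
    finally show ?thesis .
  qed
  have "summable (\<lambda>k. prob (A k))"
  proof (rule summable_comparison_test'[where N=1])
    show "summable (\<lambda>k. r ^ k)"
      using \<open>0 < \<delta>\<close> C(1) by (intro summable_geometric) (simp add: r_def)
  qed (use A_le in auto)
  then have "AE \<omega> in M. \<forall>\<^sub>F k in sequentially. \<omega> \<in> space M - A k"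
    by (intro borel_cantelli_AE1 A_events) (simp_all add: emeasure_finite less_top[symmetric])
  then show ?thesis
    by (rule AE_mp) (auto simp: A_def not_le elim: eventually_mono)
qed

lemma (in prob_space) AE_partial_sums_at_bot:
  fixes Y :: "nat \<Rightarrow> 'a \<Rightarrow> real" and G :: "nat \<Rightarrow> real"
  assumes indep: "indep_vars (\<lambda>_. borel) Y {1..}"
    and bounded: "\<And>m \<omega>. 1 \<le> m \<Longrightarrow> \<omega> \<in> space M \<Longrightarrow> \<bar>Y m \<omega>\<bar> \<le> B"
    and mean: "\<And>m. 1 \<le> m \<Longrightarrow> expectation (Y m) = G m"
    and G_per: "\<And>m. G (m + n) = G m" and G_nonpos: "\<And>m. G m \<le> 0"
    and k0: "k0 \<in> {1..n}" "G k0 < 0"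
  shows "AE \<omega> in M. filterlim (\<lambda>k. \<Sum>m=1..k. Y m \<omega>) at_bot sequentially"
proof -
  define \<kappa> where "\<kappa> = - G k0"
  define \<delta> where "\<delta> = \<kappa> / (2 * n)"
  have "0 < n" "0 < \<kappa>"
    using k0 by (auto simp: \<kappa>_def)
  then have "0 < \<delta>" "\<delta> < \<kappa> / n"
    by (simp_all add: \<delta>_def field_simps)
  have "AE \<omega> in M. \<forall>\<^sub>F k in sequentially.
      (\<Sum>m=1..k. Y m \<omega>) < (\<Sum>m=1..k. expectation (Y m)) + \<delta> * k"
    using indep bounded \<open>0 < \<delta>\<close> by (rule AE_eventually_sum_lt_expectation)
  then show ?thesis
  proof (rule AE_mp, intro AE_I2 impI)
    fix \<omega> assume "\<forall>\<^sub>F k in sequentially.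
      (\<Sum>m=1..k. Y m \<omega>) < (\<Sum>m=1..k. expectation (Y m)) + \<delta> * k"
    then have "\<forall>\<^sub>F k in sequentially. (\<Sum>m=1..k. Y m \<omega>) \<le> \<delta> * k - \<kappa> * real (k div n)"
    proof eventually_elim
      case (elim k)
      have "(\<Sum>m=1..k. expectation (Y m)) = (\<Sum>m=1..k. G m)"
        using mean by (intro sum.cong) auto
      also have "\<dots> \<le> - \<kappa> * real (k div n)"
        using sum_periodic_nonpos_le[of G n, OF G_per G_nonpos k0(1)]
        by (simp add: \<kappa>_def mult.commute)
      finally show ?case
        using elim by linarith
    qed
    then show "filterlim (\<lambda>k. \<Sum>m=1..k. Y m \<omega>) at_bot sequentially"
      using \<open>0 < n\<close> \<open>0 < \<kappa>\<close> \<open>\<delta> < \<kappa> / n\<close>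
      by (intro filterlim_at_bot_below_linear_drift[where \<kappa> = \<kappa> and \<delta> = \<delta>]) auto
  qed
qed

lemma lik_pos:
  assumes "\<And>x y. 0 < l x y \<and> l x y < 1"
  shows "0 < lik l v x y"
  using assms[of x y] unfolding lik_def by simp

definition log_lik_ratio ::
    "('a \<Rightarrow> 'b \<Rightarrow> real) \<Rightarrow> (nat \<Rightarrow> 'b) \<Rightarrow> (nat \<Rightarrow> nat) \<Rightarrow> 'a \<Rightarrow> 'a \<Rightarrow> nat \<Rightarrow> real" where
  "log_lik_ratio l xi d x y k = (\<Sum>m=1..k. ln (lik l (d m) x (xi m)) - ln (lik l (d m) y (xi m)))"

lemma exp_log_lik_ratio:
  assumes "\<And>x y. 0 < l x y \<and> l x y < 1"
  shows "exp (log_lik_ratio l xi d x y k) =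
    (\<Prod>m=1..k. lik l (d m) x (xi m)) / (\<Prod>m=1..k. lik l (d m) y (xi m))"
proof -
  have "exp (log_lik_ratio l xi d x y k) =
      (\<Prod>m=1..k. exp (ln (lik l (d m) x (xi m)) - ln (lik l (d m) y (xi m))))"
    unfolding log_lik_ratio_def by (rule exp_sum) simp
  also have "\<dots> = (\<Prod>m=1..k. lik l (d m) x (xi m) / lik l (d m) y (xi m))"
    using lik_pos[of l, OF assms] by (intro prod.cong) (simp_all add: exp_diff)
  finally show ?thesis
    by (simp add: prod_dividef)
qed

lemma phat_eq_normalized_prod:
  assumes lik_bounds: "\<And>x y. 0 < l x y \<and> l x y < 1"
    and p0_pos: "\<And>i. i \<in> {1..M} \<Longrightarrow> 0 < p0 i" and p0_sum: "(\<Sum>i=1..M. p0 i) = 1"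
  shows "phat l c M p0 xi d k i = p0 i * (\<Prod>m=1..k. lik l (d m) (c i) (xi m)) /
           (\<Sum>i'=1..M. p0 i' * (\<Prod>m=1..k. lik l (d m) (c i') (xi m)))"
proof (induction k arbitrary: i)
  case 0
  then show ?case using p0_sum by simp
next
  case (Suc k)
  define L where "L i = (\<Prod>m=1..k. lik l (d m) (c i) (xi m))" for i
  define Z where "Z = (\<Sum>i'=1..M. p0 i' * L i')"
  define g where "g i = lik l (d (Suc k)) (c i) (xi (Suc k))" for i
  have "{1..M} \<noteq> {}"
    using p0_sum by (metis sum.empty zero_neq_one)
  then have "0 < Z"
    unfolding Z_def L_def using p0_pos lik_pos[OF lik_bounds]
    by (intro sum_pos mult_pos_pos prod_pos) auto
  have "phat l c M p0 xi d (Suc k) i = g i * (p0 i * L i / Z) / (\<Sum>j=1..M. g j * (p0 j * L j / Z))"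
    using Suc.IH by (simp add: g_def L_def Z_def)
  also have "\<dots> = g i * (p0 i * L i) / (\<Sum>j=1..M. g j * (p0 j * L j))"
    using \<open>0 < Z\<close> by (simp add: sum_divide_distrib[symmetric])
  finally show ?case
    by (simp add: g_def L_def prod.nat_ivl_Suc' mult_ac)
qed

lemma phat_eq_odds:
  assumes lik_bounds: "\<And>x y. 0 < l x y \<and> l x y < 1"
    and p0_pos: "\<And>i. i \<in> {1..M} \<Longrightarrow> 0 < p0 i" and p0_sum: "(\<Sum>i=1..M. p0 i) = 1"
    and j: "j \<in> {1..M}"
  shows "phat l c M p0 xi d k j =
    p0 j / (p0 j + (\<Sum>i\<in>{1..M}-{j}. p0 i * exp (log_lik_ratio l xi d (c i) (c j) k)))"
proof -
  define L where "L i = (\<Prod>m=1..k. lik l (d m) (c i) (xi m))" for i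
  have "0 < L j"
    unfolding L_def using lik_pos[OF lik_bounds] by (intro prod_pos) auto
  have "phat l c M p0 xi d k j = p0 j / ((\<Sum>i=1..M. p0 i * L i) / L j)"
    using phat_eq_normalized_prod[of l, OF lik_bounds p0_pos p0_sum] \<open>0 < L j\<close> by (simp add: L_def)
  also have "(\<Sum>i=1..M. p0 i * L i) / L j = p0 j + (\<Sum>i\<in>{1..M}-{j}. p0 i * (L i / L j))"
    using j \<open>0 < L j\<close> by (simp add: add_divide_distrib sum_divide_distrib sum.remove[of _ j])
  finally show ?thesis
    by (simp add: exp_log_lik_ratio[of l, OF lik_bounds] L_def)
qed

lemma phat_tendsto_1:
  assumes lik_bounds: "\<And>x y. 0 < l x y \<and> l x y < 1"
    and p0_pos: "\<And>i. i \<in> {1..M} \<Longrightarrow> 0 < p0 i" and p0_sum: "(\<Sum>i=1..M. p0 i) = 1"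
    and j: "j \<in> {1..M}"
    and llr: "\<And>i. i \<in> {1..M}-{j} \<Longrightarrow> filterlim (log_lik_ratio l xi d (c i) (c j)) at_bot sequentially"
  shows "(\<lambda>k. phat l c M p0 xi d k j) \<longlonglongrightarrow> 1"
proof -
  have odds: "phat l c M p0 xi d k j =
      p0 j / (p0 j + (\<Sum>i\<in>{1..M}-{j}. p0 i * exp (log_lik_ratio l xi d (c i) (c j) k)))" for k
    using lik_bounds p0_pos p0_sum j by (rule phat_eq_odds)
  have "(\<lambda>k. \<Sum>i\<in>{1..M}-{j}. p0 i * exp (log_lik_ratio l xi d (c i) (c j) k)) \<longlonglongrightarrow> (\<Sum>i\<in>{1..M}-{j}. p0 i * 0)"
    using llr by (intro tendsto_sum tendsto_mult tendsto_const filterlim_compose[OF exp_at_bot]) auto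
  then have "(\<lambda>k. p0 j / (p0 j + (\<Sum>i\<in>{1..M}-{j}. p0 i * exp (log_lik_ratio l xi d (c i) (c j) k))))
      \<longlonglongrightarrow> p0 j / (p0 j + 0)"
    using p0_pos[OF j] by (intro tendsto_divide tendsto_add tendsto_const) auto
  then show ?thesis
    using p0_pos[OF j] by (simp add: odds)
qed

lemma AE_log_lik_ratio_at_bot:
  fixes Mp :: "'w measure" and d :: "nat \<Rightarrow> 'w \<Rightarrow> nat" and l :: "'a \<Rightarrow> 'b \<Rightarrow> real"
    and xi :: "nat \<Rightarrow> 'b"
  assumes "prob_space Mp"
    and indep: "prob_space.indep_vars Mp (\<lambda>_. count_space UNIV) d {1..}"
    and d01: "\<And>k \<omega>. 1 \<le> k \<Longrightarrow> \<omega> \<in> space Mp \<Longrightarrow> d k \<omega> \<in> {0, 1}"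
    and prob_d: "\<And>k. 1 \<le> k \<Longrightarrow> measure Mp {\<omega> \<in> space Mp. d k \<omega> = 1} = l s (xi k)"
    and lik_bounds: "\<And>x y. 0 < l x y \<and> l x y < 1"
    and per: "\<And>k. xi (k + n) = xi k"
    and k0: "k0 \<in> {1..n}" "l x (xi k0) \<noteq> l s (xi k0)"
  shows "AE \<omega> in Mp. filterlim (log_lik_ratio l xi (\<lambda>m. d m \<omega>) x s) at_bot sequentially"
proof -
  interpret prob_space Mp by fact
  define f where "f m v = ln (lik l v x (xi m)) - ln (lik l v s (xi m))" for m v
  define G where "G m = l s (xi m) * (ln (l x (xi m)) - ln (l s (xi m)))
    + (1 - l s (xi m)) * (ln (1 - l x (xi m)) - ln (1 - l s (xi m)))" for m
  define B where "B = Max ((\<lambda>m. \<bar>f m 0\<bar> + \<bar>f m 1\<bar>) ` {..<n})"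
  have "0 < n"
    using k0 by simp
  have "G m \<le> 0" for m
    unfolding G_def using gibbs_bernoulli(1)[of "l s (xi m)" "l x (xi m)"] lik_bounds by auto
  moreover have "G k0 < 0"
    unfolding G_def using gibbs_bernoulli(2)[of "l s (xi k0)" "l x (xi k0)"] lik_bounds k0(2)
    by auto
  moreover have "G (m + n) = G m" for m
    using per by (simp add: G_def)
  moreover have "expectation (\<lambda>\<omega>. f m (d m \<omega>)) = G m" if "1 \<le> m" for m
  proof -
    have "random_variable (count_space UNIV) (d m)"
      using indep that unfolding indep_vars_def by auto
    then show ?thesis
      using expectation_fun_of_bernoulli[of "d m" "f m"] d01 prob_d that
      by (simp add: f_def G_def lik_def algebra_simps)
  qed
  moreover have "\<bar>f m (d m \<omega>)\<bar> \<le> B" if "1 \<le> m" "\<omega> \<in> space Mp" for m \<omega>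
  proof -
    have "\<bar>f m (d m \<omega>)\<bar> \<le> \<bar>f m 0\<bar> + \<bar>f m 1\<bar>"
      using d01[OF that] by auto
    also have "\<dots> = \<bar>f (m mod n) 0\<bar> + \<bar>f (m mod n) 1\<bar>"
      using periodic_mod[of xi n m, OF per] by (simp add: f_def)
    also have "\<dots> \<le> B"
      unfolding B_def using \<open>0 < n\<close> by (intro Max_ge) auto
    finally show ?thesis .
  qed
  moreover have "indep_vars (\<lambda>_. borel) (\<lambda>m \<omega>. f m (d m \<omega>)) {1..}"
    by (rule indep_vars_compose2[OF indep]) auto
  ultimately have "AE \<omega> in Mp. filterlim (\<lambda>k. \<Sum>m=1..k. f m (d m \<omega>)) at_bot sequentially"
    using k0(1) by (intro AE_partial_sums_at_bot[where G = G and B = B]) auto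
  then show ?thesis
    unfolding log_lik_ratio_def f_def .
qed

theorem corollary1:
  fixes S :: "(real ^ 'q) set"
    and l :: "real ^ 'q \<Rightarrow> real ^ 'q \<Rightarrow> real"
    and s :: "real ^ 'q"
    and xi :: "nat \<Rightarrow> real ^ 'q"
    and n M j :: nat
    and Mp :: "'w measure"
    and d :: "nat \<Rightarrow> 'w \<Rightarrow> nat"
    and c :: "nat \<Rightarrow> real ^ 'q"
    and p0 :: "nat \<Rightarrow> real"
  assumes "compact S"
    and "continuous_on UNIV (\<lambda>(x, y). l x y)"
    and "\<And>x y. 0 < l x y \<and> l x y < 1"
    and "s \<in> S"
    and "0 < n" and "\<And>k. xi (k + n) = xi k"
    and "prob_space Mp"
    and "prob_space.indep_vars Mp (\<lambda>_. count_space UNIV) d {1..}"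
    and "\<And>k \<omega>. 1 \<le> k \<Longrightarrow> \<omega> \<in> space Mp \<Longrightarrow> d k \<omega> \<in> {0, 1}"
    and "\<And>k. 1 \<le> k \<Longrightarrow> measure Mp {\<omega> \<in> space Mp. d k \<omega> = 1} = l s (xi k)"
    and "inj_on c {1..M}" and "c ` {1..M} \<subseteq> S"
    and "\<And>i. i \<in> {1..M} \<Longrightarrow> 0 < p0 i \<and> p0 i < 1"
    and "(\<Sum>i=1..M. p0 i) = 1"
    and "j \<in> {1..M}" and "c j = s"
    and "(\<Inter>k\<in>{1..n}. {x \<in> S. l x (xi k) = l s (xi k)}) = {s}"
  shows "AE \<omega> in Mp. (\<lambda>k. phat l c M p0 xi (\<lambda>k. d k \<omega>) k j) \<longlonglongrightarrow> 1"
proof -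
  note lik_bounds = assms(3) and p0_pos = assms(13)[THEN conjunct1]
  have "AE \<omega> in Mp. filterlim (log_lik_ratio l xi (\<lambda>k. d k \<omega>) (c i) (c j)) at_bot sequentially"
    if i: "i \<in> {1..M}-{j}" for i
  proof -
    have "c i \<noteq> c j"
      using i assms(15) inj_onD[OF assms(11)] by blast
    then have "c i \<notin> (\<Inter>k\<in>{1..n}. {x \<in> S. l x (xi k) = l s (xi k)})"
      using assms(16,17) by simp
    moreover have "c i \<in> S"
      using i assms(12) by blast
    ultimately obtain k0 where "k0 \<in> {1..n}" "l (c i) (xi k0) \<noteq> l s (xi k0)"
      by auto
    then show ?thesis
      unfolding \<open>c j = s\<close> by (intro AE_log_lik_ratio_at_bot[where d = d and l = l and xi = xi and n = n,
          OF assms(7-10) lik_bounds assms(6)])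
  qed
  then have "AE \<omega> in Mp. \<forall>i\<in>{1..M}-{j}.
      filterlim (log_lik_ratio l xi (\<lambda>k. d k \<omega>) (c i) (c j)) at_bot sequentially"
    by (intro AE_finite_allI) auto
  then show ?thesis
    by eventually_elim (rule phat_tendsto_1, use lik_bounds p0_pos assms(14,15) in auto)
qed

end
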